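(* A completely simple semigroup $S=(G,P,\Lambda,I)$ is an equational domain in the language $\mathcal{L}_S=\{\cdot,{}^{-1}\}\cup\{s\mid s\in S\}$ if and only if both of the following hold: (1) the sandwich matrix $P$ is non-singular; (2) the structural group $G$ is an equational domain in the group language $\mathcal{L}_G$.
   Context: Rees representation: a completely simple semigroup $S=(G,P,\Lambda,I)$ is given by a group $G$ (structural group), index sets $\Lambda,I$ (each containing an element $1$), and a matrix $P=(p_{i\lambda})_{i\in I,\lambda\in\Lambda}$ over $G$ (sandwich matrix) normalised so that $p_{1\lambda}=p_{i1}=1_G$; elements are triples $(\lambda,g,i)$ with product $(\lambda,g,i)(\mu,h,j)=(\lambda,gp_{i\mu}h,j)$ and inversion $(\lambda,g,i)^{-1}=(\lambda,p_{i\lambda}^{-1}g^{-1}p_{i\lambda}^{-1},i)$. $P$ is non-singular if it has no two equal rows and no two equal columns. The language $\mathcal{L}_S$ has a constant for each element of $S$; the group language $\mathcal{L}_G$ is $\{\cdot,{}^{-1},1\}$ plus a constant for each element of $G$. An equation is an equality of two terms; a system is a set of equations; an algebraic set is the solution set of a system; a structure is an equational domain (e.d.) if every finite union of algebraic sets is algebraic. *)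

theory Defs
  imports "HOL-Algebra.Group"
begin

datatype 'c trm = Var nat | Cst 'c | Mul "'c trm" "'c trm" | Inv "'c trm" | Unit

fun eval :: "('a \<Rightarrow> 'a \<Rightarrow> 'a) \<Rightarrow> ('a \<Rightarrow> 'a) \<Rightarrow> 'a \<Rightarrow> (nat \<Rightarrow> 'a) \<Rightarrow> 'a trm \<Rightarrow> 'a" where
  "eval m iv u \<rho> (Var k) = \<rho> k"
| "eval m iv u \<rho> (Cst c) = c"
| "eval m iv u \<rho> (Mul s t) = m (eval m iv u \<rho> s) (eval m iv u \<rho> t)"
| "eval m iv u \<rho> (Inv s) = iv (eval m iv u \<rho> s)"
| "eval m iv u \<rho> Unit = u"

fun vars :: "'c trm \<Rightarrow> nat set" where
  "vars (Var k) = {k}"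
| "vars (Cst c) = {}"
| "vars (Mul s t) = vars s \<union> vars t"
| "vars (Inv s) = vars s"
| "vars Unit = {}"

fun csts :: "'c trm \<Rightarrow> 'c set" where
  "csts (Var k) = {}"
| "csts (Cst c) = {c}"
| "csts (Mul s t) = csts s \<union> csts t"
| "csts (Inv s) = csts s"
| "csts Unit = {}"

fun has_unit :: "'c trm \<Rightarrow> bool" where
  "has_unit (Var k) = False"
| "has_unit (Cst c) = False"
| "has_unit (Mul s t) = (has_unit s \<or> has_unit t)"
| "has_unit (Inv s) = has_unit s"
| "has_unit Unit = True"

text \<open>A language is given as a set L of admissible terms.\<close>

definition solution_set ::
  "'a set \<Rightarrow> ('a \<Rightarrow> 'a \<Rightarrow> 'a) \<Rightarrow> ('a \<Rightarrow> 'a) \<Rightarrow> 'a \<Rightarrow> nat \<Rightarrow> ('a trm \<times> 'a trm) set \<Rightarrow> 'a list set" where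
  "solution_set A m iv u n Sys =
     {xs. length xs = n \<and> set xs \<subseteq> A \<and>
          (\<forall>(s, t) \<in> Sys. eval m iv u (nth xs) s = eval m iv u (nth xs) t)}"

definition algebraic_set ::
  "'a trm set \<Rightarrow> 'a set \<Rightarrow> ('a \<Rightarrow> 'a \<Rightarrow> 'a) \<Rightarrow> ('a \<Rightarrow> 'a) \<Rightarrow> 'a \<Rightarrow> nat \<Rightarrow> 'a list set \<Rightarrow> bool" where
  "algebraic_set L A m iv u n Y \<longleftrightarrow>
     (\<exists>Sys. (\<forall>(s, t) \<in> Sys. s \<in> L \<and> t \<in> L \<and> vars s \<subseteq> {..<n} \<and> vars t \<subseteq> {..<n})
           \<and> Y = solution_set A m iv u n Sys)"

definition equational_domain ::
  "'a trm set \<Rightarrow> 'a set \<Rightarrow> ('a \<Rightarrow> 'a \<Rightarrow> 'a) \<Rightarrow> ('a \<Rightarrow> 'a) \<Rightarrow> 'a \<Rightarrow> bool" where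
  "equational_domain L A m iv u \<longleftrightarrow>
     (\<forall>n F. finite F \<and> F \<noteq> {} \<and> (\<forall>Y \<in> F. algebraic_set L A m iv u n Y)
        \<longrightarrow> algebraic_set L A m iv u n (\<Union>F))"

definition group_terms :: "('g, 'b) monoid_scheme \<Rightarrow> 'g trm set" where
  "group_terms G = {t. csts t \<subseteq> carrier G}"

definition group_ed :: "('g, 'b) monoid_scheme \<Rightarrow> bool" where
  "group_ed G = equational_domain (group_terms G) (carrier G) (mult G) (m_inv G) (one G)"

text \<open>Completely simple semigroup (G,P,Lambda,I); elements are triples (lambda, g, i).\<close>
definition rees_carrier :: "('g, 'b) monoid_scheme \<Rightarrow> 'l set \<Rightarrow> 'i set \<Rightarrow> ('l \<times> 'g \<times> 'i) set" where
  "rees_carrier G Lam I = Lam \<times> carrier G \<times> I"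

fun rees_mult :: "('g, 'b) monoid_scheme \<Rightarrow> ('i \<Rightarrow> 'l \<Rightarrow> 'g) \<Rightarrow>
    ('l \<times> 'g \<times> 'i) \<Rightarrow> ('l \<times> 'g \<times> 'i) \<Rightarrow> ('l \<times> 'g \<times> 'i)" where
  "rees_mult G P (l, g, i) (m, h, j) = (l, g \<otimes>\<^bsub>G\<^esub> P i m \<otimes>\<^bsub>G\<^esub> h, j)"

fun rees_inv :: "('g, 'b) monoid_scheme \<Rightarrow> ('i \<Rightarrow> 'l \<Rightarrow> 'g) \<Rightarrow>
    ('l \<times> 'g \<times> 'i) \<Rightarrow> ('l \<times> 'g \<times> 'i)" where
  "rees_inv G P (l, g, i) =
     (l, inv\<^bsub>G\<^esub> (P i l) \<otimes>\<^bsub>G\<^esub> inv\<^bsub>G\<^esub> g \<otimes>\<^bsub>G\<^esub> inv\<^bsub>G\<^esub> (P i l), i)"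

definition rees_terms :: "('g, 'b) monoid_scheme \<Rightarrow> 'l set \<Rightarrow> 'i set \<Rightarrow> ('l \<times> 'g \<times> 'i) trm set" where
  "rees_terms G Lam I = {t. csts t \<subseteq> rees_carrier G Lam I \<and> \<not> has_unit t}"

definition rees_ed :: "('g, 'b) monoid_scheme \<Rightarrow> ('i \<Rightarrow> 'l \<Rightarrow> 'g) \<Rightarrow> 'l set \<Rightarrow> 'i set \<Rightarrow> bool" where
  "rees_ed G P Lam I = equational_domain (rees_terms G Lam I) (rees_carrier G Lam I)
      (rees_mult G P) (rees_inv G P) undefined"

definition sandwich_matrix :: "('g, 'b) monoid_scheme \<Rightarrow> ('i \<Rightarrow> 'l \<Rightarrow> 'g) \<Rightarrow> 'l set \<Rightarrow> 'i set \<Rightarrow> 'l \<Rightarrow> 'i \<Rightarrow> bool" where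
  "sandwich_matrix G P Lam I l1 i1 \<longleftrightarrow>
     l1 \<in> Lam \<and> i1 \<in> I \<and>
     (\<forall>i \<in> I. \<forall>l \<in> Lam. P i l \<in> carrier G) \<and>
     (\<forall>l \<in> Lam. P i1 l = \<one>\<^bsub>G\<^esub>) \<and> (\<forall>i \<in> I. P i l1 = \<one>\<^bsub>G\<^esub>)"

definition non_singular :: "('i \<Rightarrow> 'l \<Rightarrow> 'g) \<Rightarrow> 'l set \<Rightarrow> 'i set \<Rightarrow> bool" where
  "non_singular P Lam I \<longleftrightarrow>
     (\<forall>i \<in> I. \<forall>j \<in> I. (\<forall>l \<in> Lam. P i l = P j l) \<longrightarrow> i = j) \<and>
     (\<forall>l \<in> Lam. \<forall>m \<in> Lam. (\<forall>i \<in> I. P i l = P i m) \<longrightarrow> l = m)"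

end

theory Submission
  imports Defs
begin

(*
  The proof rests on a general criterion (equational_domain_iff_eq_or_eq): for a language closed
  under substitution, an algebra A is an equational domain iff the set {x0 = x1 or x2 = x3} in A^4
  is algebraic. Both sides of the theorem are then compared through this single set:
  - sufficiency: the elements (l1,1,j) x (\<mu>,1,i1) lie in the copy {(l1,g,i1)} of G inside S, and for
    non-singular P these "coordinates" of x determine x; so the set for S is an intersection of
    pull-backs of the set for G (rees_eq_or_eq_algebraic);
  - necessity for G: restricted to the copy of G, semigroup equations become group equations, so
    the set for G is the trace of the set for S (group_eq_or_eq_algebraic);
  - necessity of non-singularity: two equal rows (columns) give a congruence that merges two
    elements differing only in the last (first) index, and then {x = y} \<union> {(a,b)} is not
    algebraic (not_ed_by_congruence).
*)

fun subst :: "(nat \<Rightarrow> 'c trm) \<Rightarrow> 'c trm \<Rightarrow> 'c trm" where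
  "subst \<sigma> (Var k) = \<sigma> k"
| "subst \<sigma> (Cst c) = Cst c"
| "subst \<sigma> (Mul s t) = Mul (subst \<sigma> s) (subst \<sigma> t)"
| "subst \<sigma> (Inv s) = Inv (subst \<sigma> s)"
| "subst \<sigma> Unit = Unit"

lemma eval_cong:
  "(\<And>k. k \<in> vars t \<Longrightarrow> \<rho> k = \<rho>' k) \<Longrightarrow> eval m iv u \<rho> t = eval m iv u \<rho>' t"
  by (induction t) auto

lemma eval_subst: "eval m iv u \<rho> (subst \<sigma> t) = eval m iv u (\<lambda>k. eval m iv u \<rho> (\<sigma> k)) t"
  by (induction t) auto

lemma vars_subst: "vars (subst \<sigma> t) = (\<Union>k\<in>vars t. vars (\<sigma> k))"
  by (induction t) auto

lemma csts_subst: "csts (subst \<sigma> t) \<subseteq> csts t \<union> (\<Union>k\<in>vars t. csts (\<sigma> k))"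
  by (induction t) auto

lemma has_unit_subst: "has_unit (subst \<sigma> t) \<longleftrightarrow> has_unit t \<or> (\<exists>k\<in>vars t. has_unit (\<sigma> k))"
  by (induction t) auto

lemma eval_closed:
  assumes "\<And>x y. x \<in> A \<Longrightarrow> y \<in> A \<Longrightarrow> m x y \<in> A" and "\<And>x. x \<in> A \<Longrightarrow> iv x \<in> A"
    and "csts t \<subseteq> A" and "has_unit t \<Longrightarrow> u \<in> A" and "\<And>k. k \<in> vars t \<Longrightarrow> \<rho> k \<in> A"
  shows "eval m iv u \<rho> t \<in> A"
  using assms(3-) by (induction t) (auto intro: assms(1,2))

lemma nth_var_in:
  "length xs = n \<Longrightarrow> set xs \<subseteq> A \<Longrightarrow> vars t \<subseteq> {..<n} \<Longrightarrow> k \<in> vars t \<Longrightarrow> xs ! k \<in> A"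
  by (meson lessThan_iff nth_mem subset_iff)

definition system_in :: "'a trm set \<Rightarrow> nat \<Rightarrow> ('a trm \<times> 'a trm) set \<Rightarrow> bool" where
  "system_in L n Sys \<longleftrightarrow>
     (\<forall>(s, t) \<in> Sys. s \<in> L \<and> t \<in> L \<and> vars s \<subseteq> {..<n} \<and> vars t \<subseteq> {..<n})"

lemma system_inD:
  "system_in L n Sys \<Longrightarrow> (s, t) \<in> Sys \<Longrightarrow> s \<in> L \<and> t \<in> L \<and> vars s \<subseteq> {..<n} \<and> vars t \<subseteq> {..<n}"
  unfolding system_in_def by blast

lemma system_inI:
  "(\<And>s t. (s, t) \<in> Sys \<Longrightarrow> s \<in> L \<and> t \<in> L \<and> vars s \<subseteq> {..<n} \<and> vars t \<subseteq> {..<n}) \<Longrightarrow> system_in L n Sys"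
  unfolding system_in_def by blast

lemma algebraic_set_iff:
  "algebraic_set L A m iv u n Y \<longleftrightarrow> (\<exists>Sys. system_in L n Sys \<and> Y = solution_set A m iv u n Sys)"
  by (simp add: algebraic_set_def system_in_def)

lemma algebraic_INT:
  assumes "K \<noteq> {}" and "\<And>q. q \<in> K \<Longrightarrow> algebraic_set L A m iv u n (Y q)"
  shows "algebraic_set L A m iv u n (\<Inter>q\<in>K. Y q)"
proof -
  obtain Sys where Sys: "\<And>q. q \<in> K \<Longrightarrow> system_in L n (Sys q) \<and> Y q = solution_set A m iv u n (Sys q)"
    using assms(2) unfolding algebraic_set_iff by metis
  have "system_in L n (\<Union>q\<in>K. Sys q)"
    using Sys unfolding system_in_def by blast
  moreover have "(\<Inter>q\<in>K. Y q) = solution_set A m iv u n (\<Union>q\<in>K. Sys q)"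
    using Sys assms(1) unfolding solution_set_def by auto
  ultimately show ?thesis unfolding algebraic_set_iff by blast
qed

section \<open>The equational domain criterion\<close>

(* The set {x0 = x1 or x2 = x3} in A^4; its being algebraic characterises equational domains. *)
definition eq_or_eq :: "'a set \<Rightarrow> 'a list set" where
  "eq_or_eq A = {xs. length xs = 4 \<and> set xs \<subseteq> A \<and> (xs!0 = xs!1 \<or> xs!2 = xs!3)}"

(* A system T defining {x0 = x1 or x2 = x3} expresses the disjunction of any two equations
   s1 = t1, s2 = t2: substitute their four sides for the four variables of T. *)
lemma plugged_system_iff:
  assumes T: "system_in L 4 T" and DT: "eq_or_eq A = solution_set A m iv u 4 T"
    and vals: "set (map (eval m iv u \<rho>) [s1, t1, s2, t2]) \<subseteq> A"
  shows "(\<forall>(s, t)\<in>T. eval m iv u \<rho> (subst (nth [s1, t1, s2, t2]) s) =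
                    eval m iv u \<rho> (subst (nth [s1, t1, s2, t2]) t))
    \<longleftrightarrow> eval m iv u \<rho> s1 = eval m iv u \<rho> t1 \<or> eval m iv u \<rho> s2 = eval m iv u \<rho> t2"
proof -
  let ?e = "eval m iv u \<rho>"
  let ?ys = "map ?e [s1, t1, s2, t2]"
  have plugged: "?e (subst (nth [s1, t1, s2, t2]) s) = eval m iv u (nth ?ys) s"
    if "vars s \<subseteq> {..<4}" for s
    unfolding eval_subst
    by (rule eval_cong) (use that in \<open>auto simp: nth_Cons split: nat.split\<close>)
  have "(\<forall>(s, t)\<in>T. ?e (subst (nth [s1, t1, s2, t2]) s) = ?e (subst (nth [s1, t1, s2, t2]) t))
      \<longleftrightarrow> (\<forall>(s, t)\<in>T. eval m iv u (nth ?ys) s = eval m iv u (nth ?ys) t)"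
    using plugged system_inD[OF T] by fastforce
  also have "\<dots> \<longleftrightarrow> ?ys \<in> eq_or_eq A"
    using vals unfolding DT solution_set_def by simp
  also have "\<dots> \<longleftrightarrow> ?e s1 = ?e t1 \<or> ?e s2 = ?e t2"
    using vals unfolding eq_or_eq_def by simp
  finally show ?thesis .
qed

definition plug_system ::
  "('a trm \<times> 'a trm) set \<Rightarrow> ('a trm \<times> 'a trm) set \<Rightarrow> ('a trm \<times> 'a trm) set \<Rightarrow> ('a trm \<times> 'a trm) set"
  where "plug_system T S1 S2 = {(subst (nth [s1, t1, s2, t2]) s, subst (nth [s1, t1, s2, t2]) t)
      | s1 t1 s2 t2 s t. (s1, t1) \<in> S1 \<and> (s2, t2) \<in> S2 \<and> (s, t) \<in> T}"

lemma plug_system_in: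
  assumes Lsub: "\<And>t \<sigma>. t \<in> L \<Longrightarrow> (\<And>k. k \<in> vars t \<Longrightarrow> \<sigma> k \<in> L) \<Longrightarrow> subst \<sigma> t \<in> L"
    and T: "system_in L 4 T" and S1: "system_in L n S1" and S2: "system_in L n S2"
  shows "system_in L n (plug_system T S1 S2)"
proof -
  have plugged: "subst (nth [s1, t1, s2, t2]) s \<in> L \<and> vars (subst (nth [s1, t1, s2, t2]) s) \<subseteq> {..<n}"
    if "(s1, t1) \<in> S1" "(s2, t2) \<in> S2" "s \<in> L" "vars s \<subseteq> {..<4}" for s1 t1 s2 t2 s
  proof -
    have "[s1, t1, s2, t2] ! k \<in> L \<and> vars ([s1, t1, s2, t2] ! k) \<subseteq> {..<n}" if "k < 4" for k
    proof -
      have "k = 0 \<or> k = 1 \<or> k = 2 \<or> k = 3" using \<open>k < 4\<close> by auto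
      then show ?thesis
        using system_inD[OF S1 \<open>(s1, t1) \<in> S1\<close>] system_inD[OF S2 \<open>(s2, t2) \<in> S2\<close>] by auto
    qed
    then show ?thesis using that by (force simp: vars_subst intro!: Lsub)
  qed
  show ?thesis
  proof (rule system_inI)
    fix s' t' assume "(s', t') \<in> plug_system T S1 S2"
    then obtain s1 t1 s2 t2 s t where "(s1, t1) \<in> S1" "(s2, t2) \<in> S2" "(s, t) \<in> T"
      and "s' = subst (nth [s1, t1, s2, t2]) s" "t' = subst (nth [s1, t1, s2, t2]) t"
      unfolding plug_system_def by blast
    then show "s' \<in> L \<and> t' \<in> L \<and> vars s' \<subseteq> {..<n} \<and> vars t' \<subseteq> {..<n}"
      using system_inD[OF T] plugged by blast
  qed
qed

lemma solution_set_plug_system: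
  assumes Lclos: "\<And>t \<rho>. t \<in> L \<Longrightarrow> (\<And>k. k \<in> vars t \<Longrightarrow> \<rho> k \<in> A) \<Longrightarrow> eval m iv u \<rho> t \<in> A"
    and T: "system_in L 4 T" and DT: "eq_or_eq A = solution_set A m iv u 4 T"
    and S1: "system_in L n S1" and S2: "system_in L n S2"
  shows "solution_set A m iv u n (plug_system T S1 S2) =
    solution_set A m iv u n S1 \<union> solution_set A m iv u n S2"
proof (rule Set.set_eqI)
  fix xs
  let ?e = "eval m iv u (nth xs)"
  show "xs \<in> solution_set A m iv u n (plug_system T S1 S2) \<longleftrightarrow>
    xs \<in> solution_set A m iv u n S1 \<union> solution_set A m iv u n S2"
  proof (cases "length xs = n \<and> set xs \<subseteq> A")
    case False
    then show ?thesis by (auto simp: solution_set_def)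
  next
    case True
    have inA: "?e t \<in> A" if "t \<in> L" "vars t \<subseteq> {..<n}" for t
      using True that by (intro Lclos) (auto intro: nth_var_in)
    have disj: "(\<forall>(s, t)\<in>T. ?e (subst (nth [s1, t1, s2, t2]) s) = ?e (subst (nth [s1, t1, s2, t2]) t))
         \<longleftrightarrow> ?e s1 = ?e t1 \<or> ?e s2 = ?e t2"
      if "(s1, t1) \<in> S1" "(s2, t2) \<in> S2" for s1 t1 s2 t2
      using system_inD[OF S1 that(1)] system_inD[OF S2 that(2)] inA
      by (intro plugged_system_iff[OF T DT]) auto
    have "xs \<in> solution_set A m iv u n (plug_system T S1 S2) \<longleftrightarrow>
       (\<forall>s1 t1 s2 t2. (s1, t1) \<in> S1 \<longrightarrow> (s2, t2) \<in> S2 \<longrightarrow>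
          (\<forall>(s, t)\<in>T. ?e (subst (nth [s1, t1, s2, t2]) s) = ?e (subst (nth [s1, t1, s2, t2]) t)))"
      using True unfolding solution_set_def plug_system_def by blast
    also have "\<dots> \<longleftrightarrow> (\<forall>s1 t1 s2 t2. (s1, t1) \<in> S1 \<longrightarrow> (s2, t2) \<in> S2 \<longrightarrow>
          ?e s1 = ?e t1 \<or> ?e s2 = ?e t2)"
      by (simp add: disj)
    also have "\<dots> \<longleftrightarrow> (\<forall>(s1, t1)\<in>S1. ?e s1 = ?e t1) \<or> (\<forall>(s2, t2)\<in>S2. ?e s2 = ?e t2)"
      by fast
    also have "\<dots> \<longleftrightarrow> xs \<in> solution_set A m iv u n S1 \<union> solution_set A m iv u n S2"
      using True unfolding solution_set_def by auto
    finally show ?thesis .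
  qed
qed

lemma algebraic_Un:
  assumes Lsub: "\<And>t \<sigma>. t \<in> L \<Longrightarrow> (\<And>k. k \<in> vars t \<Longrightarrow> \<sigma> k \<in> L) \<Longrightarrow> subst \<sigma> t \<in> L"
    and Lclos: "\<And>t \<rho>. t \<in> L \<Longrightarrow> (\<And>k. k \<in> vars t \<Longrightarrow> \<rho> k \<in> A) \<Longrightarrow> eval m iv u \<rho> t \<in> A"
    and D: "algebraic_set L A m iv u 4 (eq_or_eq A)"
    and Y1: "algebraic_set L A m iv u n Y1" and Y2: "algebraic_set L A m iv u n Y2"
  shows "algebraic_set L A m iv u n (Y1 \<union> Y2)"
proof -
  obtain T where T: "system_in L 4 T" and DT: "eq_or_eq A = solution_set A m iv u 4 T"
    using D unfolding algebraic_set_iff by blast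
  obtain S1 where S1: "system_in L n S1" and Y1S: "Y1 = solution_set A m iv u n S1"
    using Y1 unfolding algebraic_set_iff by blast
  obtain S2 where S2: "system_in L n S2" and Y2S: "Y2 = solution_set A m iv u n S2"
    using Y2 unfolding algebraic_set_iff by blast
  show ?thesis
    unfolding algebraic_set_iff Y1S Y2S
    using plug_system_in[OF Lsub T S1 S2] solution_set_plug_system[OF Lclos T DT S1 S2] by blast
qed

lemma equational_domain_iff_eq_or_eq:
  assumes Lsub: "\<And>t \<sigma>. t \<in> L \<Longrightarrow> (\<And>k. k \<in> vars t \<Longrightarrow> \<sigma> k \<in> L) \<Longrightarrow> subst \<sigma> t \<in> L"
    and Lclos: "\<And>t \<rho>. t \<in> L \<Longrightarrow> (\<And>k. k \<in> vars t \<Longrightarrow> \<rho> k \<in> A) \<Longrightarrow> eval m iv u \<rho> t \<in> A"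
    and Lvar: "\<And>k. Var k \<in> L"
  shows "equational_domain L A m iv u \<longleftrightarrow> algebraic_set L A m iv u 4 (eq_or_eq A)"
proof
  assume ed: "equational_domain L A m iv u"
  let ?Y = "\<lambda>i j. solution_set A m iv u 4 {(Var i, Var j)}"
  have "algebraic_set L A m iv u 4 (?Y i j)" if "i < 4" "j < 4" for i j
    unfolding algebraic_set_iff
    by (rule exI[of _ "{(Var i, Var j)}"]) (simp add: system_in_def Lvar that)
  then have "algebraic_set L A m iv u 4 (\<Union>{?Y 0 1, ?Y 2 3})"
    using ed[unfolded equational_domain_def, rule_format, of "{?Y 0 1, ?Y 2 3}" 4] by simp
  moreover have "\<Union>{?Y 0 1, ?Y 2 3} = eq_or_eq A"
    unfolding eq_or_eq_def solution_set_def by auto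
  ultimately show "algebraic_set L A m iv u 4 (eq_or_eq A)" by simp
next
  assume D: "algebraic_set L A m iv u 4 (eq_or_eq A)"
  show "equational_domain L A m iv u"
    unfolding equational_domain_def
  proof (intro allI impI, elim conjE)
    fix n F assume "finite F" "F \<noteq> {}" "\<forall>Y\<in>F. algebraic_set L A m iv u n Y"
    then show "algebraic_set L A m iv u n (\<Union>F)"
    proof (induction F rule: finite_ne_induct)
      case (insert Y F)
      then show ?case by (simp add: algebraic_Un[OF Lsub Lclos D])
    qed simp
  qed
qed

section \<open>Refuting the equational domain property with a congruence\<close>

definition proj_or_const :: "('c \<Rightarrow> 'c \<Rightarrow> 'c) \<Rightarrow> bool" where
  "proj_or_const h \<longleftrightarrow> h = (\<lambda>p q. p) \<or> h = (\<lambda>p q. q) \<or> (\<exists>k. h = (\<lambda>p q. k))"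

lemma proj_or_const_swap:
  assumes "proj_or_const h" "proj_or_const h'"
    and "h p q = h' p q" "h p p = h' p p" "h q q = h' q q"
  shows "h q p = h' q p"
  using assms unfolding proj_or_const_def by auto

lemma eval_coordinate:
  assumes mul: "(\<forall>x y. c (m x y) = c x) \<or> (\<forall>x y. c (m x y) = c y)"
    and inv: "\<And>x. c (iv x) = c x"
  shows "\<not> has_unit t \<Longrightarrow> vars t \<subseteq> {..<2} \<Longrightarrow>
    \<exists>h. proj_or_const h \<and> (\<forall>x y. c (eval m iv u (nth [x, y]) t) = h (c x) (c y))"
proof (induction t)
  case (Var k)
  then have "k = 0 \<or> k = 1" by auto
  then show ?case
  proof
    assume "k = 0"
    then show ?thesis by (intro exI[of _ "\<lambda>p q. p"]) (simp add: proj_or_const_def)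
  next
    assume "k = 1"
    then show ?thesis by (intro exI[of _ "\<lambda>p q. q"]) (simp add: proj_or_const_def)
  qed
next
  case (Cst d)
  show ?case by (intro exI[of _ "\<lambda>p q. c d"]) (auto simp: proj_or_const_def)
next
  case (Mul s t)
  then show ?case using mul by auto
next
  case (Inv s)
  then show ?case by (simp add: inv)
qed simp

lemma eval_congruence:
  assumes m_closed: "\<And>x y. x \<in> A \<Longrightarrow> y \<in> A \<Longrightarrow> m x y \<in> A"
    and iv_closed: "\<And>x. x \<in> A \<Longrightarrow> iv x \<in> A"
    and m_cong: "\<And>x y x' y'. x \<in> A \<Longrightarrow> y \<in> A \<Longrightarrow> x' \<in> A \<Longrightarrow> y' \<in> A \<Longrightarrow>
      \<pi> x = \<pi> x' \<Longrightarrow> \<pi> y = \<pi> y' \<Longrightarrow> \<pi> (m x y) = \<pi> (m x' y')"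
    and iv_cong: "\<And>x x'. x \<in> A \<Longrightarrow> x' \<in> A \<Longrightarrow> \<pi> x = \<pi> x' \<Longrightarrow> \<pi> (iv x) = \<pi> (iv x')"
  shows "csts t \<subseteq> A \<Longrightarrow> \<not> has_unit t \<Longrightarrow>
    (\<And>k. k \<in> vars t \<Longrightarrow> \<rho> k \<in> A \<and> \<rho>' k \<in> A \<and> \<pi> (\<rho> k) = \<pi> (\<rho>' k)) \<Longrightarrow>
    \<pi> (eval m iv u \<rho> t) = \<pi> (eval m iv u \<rho>' t)"
proof (induction t)
  case (Mul s t)
  have "eval m iv u \<rho> r \<in> A" "eval m iv u \<rho>' r \<in> A" if "r = s \<or> r = t" for r
    using that Mul.prems by (auto intro!: eval_closed m_closed iv_closed)
  then show ?case using Mul by (auto intro!: m_cong)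
next
  case (Inv s)
  have "eval m iv u \<rho> s \<in> A" "eval m iv u \<rho>' s \<in> A"
    using Inv.prems by (auto intro!: eval_closed m_closed iv_closed)
  then show ?case using Inv by (auto intro!: iv_cong)
qed auto

lemma equation_swap:
  assumes ab: "a \<in> A" "b \<in> A" "\<pi> a = \<pi> b"
    and cong: "\<And>r \<rho> \<rho>'. r \<in> L \<Longrightarrow> (\<And>k. k \<in> vars r \<Longrightarrow> \<rho> k \<in> A \<and> \<rho>' k \<in> A \<and> \<pi> (\<rho> k) = \<pi> (\<rho>' k))
       \<Longrightarrow> \<pi> (eval m iv u \<rho> r) = \<pi> (eval m iv u \<rho>' r)"
    and coord: "\<And>r. r \<in> L \<Longrightarrow> vars r \<subseteq> {..<2} \<Longrightarrow>
       \<exists>h. proj_or_const h \<and> (\<forall>x y. c (eval m iv u (nth [x, y]) r) = h (c x) (c y))"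
    and sep: "\<And>x y. \<pi> x = \<pi> y \<Longrightarrow> c x = c y \<Longrightarrow> x = y"
    and st: "s \<in> L" "t \<in> L" "vars s \<subseteq> {..<2}" "vars t \<subseteq> {..<2}"
    and e: "eval m iv u (nth [a, b]) s = eval m iv u (nth [a, b]) t"
      "eval m iv u (nth [a, a]) s = eval m iv u (nth [a, a]) t"
      "eval m iv u (nth [b, b]) s = eval m iv u (nth [b, b]) t"
  shows "eval m iv u (nth [b, a]) s = eval m iv u (nth [b, a]) t"
proof (rule sep)
  let ?e = "\<lambda>xs. eval m iv u (nth xs)"
  have swap: "\<pi> (?e [b, a] r) = \<pi> (?e [a, b] r)" if "r \<in> L" "vars r \<subseteq> {..<2}" for r
  proof (rule cong[OF that(1)])
    fix k assume "k \<in> vars r"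
    then have "k = 0 \<or> k = 1" using that by auto
    then show "[b, a] ! k \<in> A \<and> [a, b] ! k \<in> A \<and> \<pi> ([b, a] ! k) = \<pi> ([a, b] ! k)"
      using ab by auto
  qed
  show "\<pi> (?e [b, a] s) = \<pi> (?e [b, a] t)"
    using swap[of s] swap[of t] st e(1) by simp
  obtain hs where hs: "proj_or_const hs" "\<And>x y. c (?e [x, y] s) = hs (c x) (c y)"
    using coord[OF st(1,3)] by blast
  obtain ht where ht: "proj_or_const ht" "\<And>x y. c (?e [x, y] t) = ht (c x) (c y)"
    using coord[OF st(2,4)] by blast
  have "hs (c b) (c a) = ht (c b) (c a)"
    using proj_or_const_swap[OF hs(1) ht(1)] e hs(2) ht(2) by metis
  then show "c (?e [b, a] s) = c (?e [b, a] t)" using hs(2) ht(2) by simp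
qed

(* Under the same hypotheses, if a \<noteq> b then {x = y} \<union> {(a,b)} is not algebraic: it contains
   (a,b), (a,a), (b,b) but not (b,a). *)
lemma not_ed_by_congruence:
  assumes Lvar: "\<And>k. Var k \<in> L" and Lcst: "Cst a \<in> L" "Cst b \<in> L"
    and ab: "a \<in> A" "b \<in> A" "a \<noteq> b" "\<pi> a = \<pi> b"
    and cong: "\<And>t \<rho> \<rho>'. t \<in> L \<Longrightarrow> (\<And>k. k \<in> vars t \<Longrightarrow> \<rho> k \<in> A \<and> \<rho>' k \<in> A \<and> \<pi> (\<rho> k) = \<pi> (\<rho>' k))
       \<Longrightarrow> \<pi> (eval m iv u \<rho> t) = \<pi> (eval m iv u \<rho>' t)"
    and coord: "\<And>t. t \<in> L \<Longrightarrow> vars t \<subseteq> {..<2} \<Longrightarrow>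
       \<exists>h. proj_or_const h \<and> (\<forall>x y. c (eval m iv u (nth [x, y]) t) = h (c x) (c y))"
    and sep: "\<And>x y. \<pi> x = \<pi> y \<Longrightarrow> c x = c y \<Longrightarrow> x = y"
  shows "\<not> equational_domain L A m iv u"
proof
  assume ed: "equational_domain L A m iv u"
  let ?sol = "solution_set A m iv u 2"
  let ?Y1 = "?sol {(Var 0, Var 1)}" and ?Y2 = "?sol {(Var 0, Cst a), (Var 1, Cst b)}"
  have "algebraic_set L A m iv u 2 ?Y1"
    unfolding algebraic_set_iff
    by (rule exI[of _ "{(Var 0, Var 1)}"]) (simp add: system_in_def Lvar)
  moreover have "algebraic_set L A m iv u 2 ?Y2"
    unfolding algebraic_set_iff
    by (rule exI[of _ "{(Var 0, Cst a), (Var 1, Cst b)}"]) (simp add: system_in_def Lvar Lcst)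
  ultimately have "algebraic_set L A m iv u 2 (?Y1 \<union> ?Y2)"
    using ed[unfolded equational_domain_def, rule_format, of "{?Y1, ?Y2}" 2] by simp
  then obtain T where T: "system_in L 2 T" and YT: "?Y1 \<union> ?Y2 = ?sol T"
    unfolding algebraic_set_iff by blast
  have in_sol: "[a, b] \<in> ?sol T" "[a, a] \<in> ?sol T" "[b, b] \<in> ?sol T"
    using ab unfolding YT[symmetric] by (auto simp: solution_set_def)
  have "eval m iv u (nth [b, a]) s = eval m iv u (nth [b, a]) t" if "(s, t) \<in> T" for s t
    using system_inD[OF T that] in_sol that unfolding solution_set_def
    by (intro equation_swap[of a A b \<pi> L m iv u c, OF ab(1,2,4) cong coord sep]) auto
  then have "[b, a] \<in> ?sol T"
    using ab unfolding solution_set_def by auto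
  moreover have "[b, a] \<notin> ?Y1 \<union> ?Y2"
    using ab(3) by (auto simp: solution_set_def)
  ultimately show False unfolding YT by blast
qed

section \<open>The completely simple semigroup\<close>

lemma group_terms_subst:
  "t \<in> group_terms G \<Longrightarrow> (\<And>k. k \<in> vars t \<Longrightarrow> \<sigma> k \<in> group_terms G) \<Longrightarrow> subst \<sigma> t \<in> group_terms G"
  unfolding group_terms_def using csts_subst[of \<sigma> t] by blast

lemma rees_terms_subst:
  "t \<in> rees_terms G Lam I \<Longrightarrow> (\<And>k. k \<in> vars t \<Longrightarrow> \<sigma> k \<in> rees_terms G Lam I) \<Longrightarrow>
   subst \<sigma> t \<in> rees_terms G Lam I"
  unfolding rees_terms_def using csts_subst[of \<sigma> t] has_unit_subst[of \<sigma> t] by blast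

lemma (in group) group_terms_eval_closed:
  "t \<in> group_terms G \<Longrightarrow> (\<And>k. k \<in> vars t \<Longrightarrow> \<rho> k \<in> carrier G) \<Longrightarrow>
   eval (mult G) (m_inv G) \<one> \<rho> t \<in> carrier G"
  unfolding group_terms_def by (rule eval_closed) auto

locale rees = group G for G :: "('g, 'b) monoid_scheme" (structure) +
  fixes P :: "'i \<Rightarrow> 'l \<Rightarrow> 'g" and Lam :: "'l set" and I :: "'i set" and l1 :: 'l and i1 :: 'i
  assumes sandwich: "sandwich_matrix G P Lam I l1 i1"
begin

abbreviation "S \<equiv> rees_carrier G Lam I"
abbreviation "evS \<equiv> eval (rees_mult G P) (rees_inv G P) undefined"
abbreviation "evG \<equiv> eval (mult G) (m_inv G) \<one>"

lemma l1: "l1 \<in> Lam" and i1: "i1 \<in> I"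
  and P_closed: "\<And>i l. i \<in> I \<Longrightarrow> l \<in> Lam \<Longrightarrow> P i l \<in> carrier G"
  and P_row1: "\<And>l. l \<in> Lam \<Longrightarrow> P i1 l = \<one>"
  and P_col1: "\<And>i. i \<in> I \<Longrightarrow> P i l1 = \<one>"
  using sandwich unfolding sandwich_matrix_def by auto

lemma rees_mult_closed: "x \<in> S \<Longrightarrow> y \<in> S \<Longrightarrow> rees_mult G P x y \<in> S"
  by (cases x; cases y) (auto simp: rees_carrier_def P_closed)

lemma rees_inv_closed: "x \<in> S \<Longrightarrow> rees_inv G P x \<in> S"
  by (cases x) (auto simp: rees_carrier_def P_closed)

lemma fst_rees_mult: "fst (rees_mult G P x y) = fst x"
  by (cases x; cases y) simp

lemma idx_rees_mult: "snd (snd (rees_mult G P x y)) = snd (snd y)"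
  by (cases x; cases y) simp

lemma rees_terms_eval_closed:
  "t \<in> rees_terms G Lam I \<Longrightarrow> (\<And>k. k \<in> vars t \<Longrightarrow> \<rho> k \<in> S) \<Longrightarrow> evS \<rho> t \<in> S"
  unfolding rees_terms_def by (rule eval_closed) (auto intro: rees_mult_closed rees_inv_closed)

subsection \<open>Sufficiency\<close>

(* The subgroup {(l1, g, i1)} of S is a copy of G; embT transports group terms to semigroup
   terms, with \<sigma> supplying the terms substituted for the variables. *)
fun embT :: "(nat \<Rightarrow> ('l \<times> 'g \<times> 'i) trm) \<Rightarrow> 'g trm \<Rightarrow> ('l \<times> 'g \<times> 'i) trm" where
  "embT \<sigma> (Var k) = \<sigma> k"
| "embT \<sigma> (Cst g) = Cst (l1, g, i1)"
| "embT \<sigma> (Mul s t) = Mul (embT \<sigma> s) (embT \<sigma> t)"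
| "embT \<sigma> (Inv s) = Inv (embT \<sigma> s)"
| "embT \<sigma> Unit = Cst (l1, \<one>, i1)"

lemma vars_embT: "vars (embT \<sigma> t) = (\<Union>k\<in>vars t. vars (\<sigma> k))"
  by (induction t) auto

lemma embT_rees_terms:
  "t \<in> group_terms G \<Longrightarrow> (\<And>k. k \<in> vars t \<Longrightarrow> \<sigma> k \<in> rees_terms G Lam I) \<Longrightarrow>
   embT \<sigma> t \<in> rees_terms G Lam I"
  unfolding group_terms_def rees_terms_def
  by (induction t) (auto simp: rees_carrier_def l1 i1)

lemma eval_embT:
  assumes "t \<in> group_terms G"
    and "\<And>k. k \<in> vars t \<Longrightarrow> evS \<rho> (\<sigma> k) = (l1, y k, i1) \<and> y k \<in> carrier G"
  shows "evS \<rho> (embT \<sigma> t) = (l1, evG y t, i1)"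
  using assms
proof (induction t)
  case (Mul s t)
  then have "evG y s \<in> carrier G" "evG y t \<in> carrier G"
    by (auto simp: group_terms_def intro!: group_terms_eval_closed)
  with Mul show ?case by (simp add: group_terms_def P_row1 l1)
next
  case (Inv s)
  then have "evG y s \<in> carrier G"
    by (auto simp: group_terms_def intro!: group_terms_eval_closed)
  with Inv show ?case by (simp add: group_terms_def P_row1 l1)
qed (auto simp: group_terms_def)

lemma algebraic_pullback_to_rees:
  assumes Y: "algebraic_set (group_terms G) (carrier G) (mult G) (m_inv G) \<one> k Y"
    and \<sigma>: "\<And>i. i < k \<Longrightarrow> \<sigma> i \<in> rees_terms G Lam I \<and> vars (\<sigma> i) \<subseteq> {..<n}"
    and \<sigma>H: "\<And>xs i. length xs = n \<Longrightarrow> set xs \<subseteq> S \<Longrightarrow> i < k \<Longrightarrow>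
       fst (evS (nth xs) (\<sigma> i)) = l1 \<and> snd (snd (evS (nth xs) (\<sigma> i))) = i1"
  shows "algebraic_set (rees_terms G Lam I) S (rees_mult G P) (rees_inv G P) undefined n
     {xs. length xs = n \<and> set xs \<subseteq> S \<and> map (\<lambda>i. fst (snd (evS (nth xs) (\<sigma> i)))) [0..<k] \<in> Y}"
    (is "algebraic_set _ _ _ _ _ n ?X")
proof -
  obtain T where T: "system_in (group_terms G) k T"
    and YT: "Y = solution_set (carrier G) (mult G) (m_inv G) \<one> k T"
    using Y unfolding algebraic_set_iff by blast
  define Sys where "Sys = {(embT \<sigma> s, embT \<sigma> t) | s t. (s, t) \<in> T}"
  have "system_in (rees_terms G Lam I) n Sys"
  proof (rule system_inI)
    fix s' t' assume "(s', t') \<in> Sys"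
    then obtain s t where st: "(s, t) \<in> T" "s' = embT \<sigma> s" "t' = embT \<sigma> t"
      unfolding Sys_def by blast
    then show "s' \<in> rees_terms G Lam I \<and> t' \<in> rees_terms G Lam I \<and> vars s' \<subseteq> {..<n} \<and> vars t' \<subseteq> {..<n}"
      using system_inD[OF T st(1)] \<sigma> by (force simp: vars_embT intro!: embT_rees_terms)
  qed
  moreover have "?X = solution_set S (rees_mult G P) (rees_inv G P) undefined n Sys"
  proof (rule Set.set_eqI)
    fix xs
    show "xs \<in> ?X \<longleftrightarrow> xs \<in> solution_set S (rees_mult G P) (rees_inv G P) undefined n Sys"
    proof (cases "length xs = n \<and> set xs \<subseteq> S")
      case False
      then show ?thesis by (auto simp: solution_set_def)
    next
      case True
      define ys where "ys = map (\<lambda>i. fst (snd (evS (nth xs) (\<sigma> i)))) [0..<k]"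
      have "evS (nth xs) (\<sigma> i) \<in> S" if "i < k" for i
        using True \<sigma>[OF that] by (intro rees_terms_eval_closed) (auto intro: nth_var_in)
      moreover have "fst (evS (nth xs) (\<sigma> i)) = l1 \<and> snd (snd (evS (nth xs) (\<sigma> i))) = i1" if "i < k" for i
        using \<sigma>H True that by blast
      ultimately have H: "evS (nth xs) (\<sigma> i) = (l1, ys ! i, i1) \<and> ys ! i \<in> carrier G" if "i < k" for i
        using that unfolding ys_def by (force simp: rees_carrier_def)
      have ys: "length ys = k" "set ys \<subseteq> carrier G"
        using H by (auto simp: ys_def in_set_conv_nth)
      have eq: "evS (nth xs) (embT \<sigma> s) = (l1, evG (nth ys) s, i1)"
        if "s \<in> group_terms G" "vars s \<subseteq> {..<k}" for s
        using that H by (intro eval_embT) auto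
      have "xs \<in> solution_set S (rees_mult G P) (rees_inv G P) undefined n Sys \<longleftrightarrow>
          (\<forall>(s, t)\<in>T. evS (nth xs) (embT \<sigma> s) = evS (nth xs) (embT \<sigma> t))"
        using True unfolding solution_set_def Sys_def by blast
      also have "\<dots> \<longleftrightarrow> (\<forall>(s, t)\<in>T. evG (nth ys) s = evG (nth ys) t)"
        using eq system_inD[OF T] by fastforce
      also have "\<dots> \<longleftrightarrow> xs \<in> ?X"
        using True ys unfolding YT solution_set_def ys_def by simp
      finally show ?thesis ..
    qed
  qed
  ultimately show ?thesis unfolding algebraic_set_iff by blast
qed

(* The group coordinates of x: coord j \<mu> x is the middle entry of (l1,1,j) x (\<mu>,1,i1). *)
fun coord :: "'i \<Rightarrow> 'l \<Rightarrow> 'l \<times> 'g \<times> 'i \<Rightarrow> 'g" where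
  "coord j \<mu> (l, g, i) = P j l \<otimes> g \<otimes> P i \<mu>"

lemma coord_closed: "x \<in> S \<Longrightarrow> j \<in> I \<Longrightarrow> \<mu> \<in> Lam \<Longrightarrow> coord j \<mu> x \<in> carrier G"
  by (cases x) (auto simp: rees_carrier_def P_closed)

definition coord_term :: "'i \<Rightarrow> 'l \<Rightarrow> ('l \<times> 'g \<times> 'i) trm \<Rightarrow> ('l \<times> 'g \<times> 'i) trm" where
  "coord_term j \<mu> t = Mul (Mul (Cst (l1, \<one>, j)) t) (Cst (\<mu>, \<one>, i1))"

lemma eval_coord_term:
  "evS \<rho> t \<in> S \<Longrightarrow> j \<in> I \<Longrightarrow> \<mu> \<in> Lam \<Longrightarrow> evS \<rho> (coord_term j \<mu> t) = (l1, coord j \<mu> (evS \<rho> t), i1)"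
  unfolding coord_term_def by (cases "evS \<rho> t") (auto simp: rees_carrier_def P_closed m_assoc)

(* For a non-singular sandwich matrix the coordinates determine the element: coordinate (i1,l1)
   is its middle entry, the coordinates (j,l1) its column P j l, and (i1,\<mu>) its row P i \<mu>. *)
lemma coords_separate:
  assumes ns: "non_singular P Lam I" and x: "x \<in> S" and x': "x' \<in> S"
    and eq: "\<And>j \<mu>. j \<in> I \<Longrightarrow> \<mu> \<in> Lam \<Longrightarrow> coord j \<mu> x = coord j \<mu> x'"
  shows "x = x'"
proof -
  obtain l g i l' g' i' where xe: "x = (l, g, i)" and xe': "x' = (l', g', i')"
    by (cases x, cases x')
  have c: "l \<in> Lam" "g \<in> carrier G" "i \<in> I" "l' \<in> Lam" "g' \<in> carrier G" "i' \<in> I"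
    using x x' xe xe' by (auto simp: rees_carrier_def)
  have gg: "g = g'" using eq[OF i1 l1] c by (simp add: xe xe' P_row1 P_col1)
  have "P j l = P j l'" if "j \<in> I" for j
  proof -
    have "P j l \<otimes> g = P j l' \<otimes> g" using eq[OF that l1] c gg that
      by (simp add: xe xe' P_col1 P_closed)
    then show ?thesis using c that by (simp add: P_closed)
  qed
  then have ll: "l = l'" using ns c unfolding non_singular_def by blast
  have "P i \<mu> = P i' \<mu>" if "\<mu> \<in> Lam" for \<mu>
  proof -
    have "g \<otimes> P i \<mu> = g \<otimes> P i' \<mu>" using eq[OF i1 that] c gg that
      by (simp add: xe xe' P_row1 P_closed)
    then show ?thesis using c that by (simp add: P_closed)
  qed
  then have "i = i'" using ns c unfolding non_singular_def by blast
  then show ?thesis using gg ll xe xe' by simp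
qed

lemma eq_or_eq_via_coords:
  assumes ns: "non_singular P Lam I" and xs: "length xs = 4" "set xs \<subseteq> S"
  shows "xs \<in> eq_or_eq S \<longleftrightarrow> (\<forall>j\<in>I. \<forall>\<mu>\<in>Lam. \<forall>j'\<in>I. \<forall>\<mu>'\<in>Lam.
    coord j \<mu> (xs ! 0) = coord j \<mu> (xs ! 1) \<or> coord j' \<mu>' (xs ! 2) = coord j' \<mu>' (xs ! 3))"
proof -
  let ?same = "\<lambda>x y. \<forall>j\<in>I. \<forall>\<mu>\<in>Lam. coord j \<mu> x = coord j \<mu> y"
  have same: "?same (xs ! a) (xs ! b) \<longleftrightarrow> xs ! a = xs ! b" if "a < 4" "b < 4" for a b
    using coords_separate[OF ns, of "xs ! a" "xs ! b"] xs that by (auto simp: nth_mem subsetD)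
  have "xs \<in> eq_or_eq S \<longleftrightarrow> ?same (xs ! 0) (xs ! 1) \<or> ?same (xs ! 2) (xs ! 3)"
    using xs same[of 0 1] same[of 2 3] by (simp add: eq_or_eq_def)
  then show ?thesis by blast
qed

(* Sufficiency: {x0 = x1 or x2 = x3} in S^4 is the intersection over all choices of coordinates
   (j,\<mu>), (j',\<mu>') of the pull-backs of the corresponding set in G^4. *)
lemma rees_eq_or_eq_algebraic:
  assumes ns: "non_singular P Lam I"
    and D: "algebraic_set (group_terms G) (carrier G) (mult G) (m_inv G) \<one> 4 (eq_or_eq (carrier G))"
  shows "algebraic_set (rees_terms G Lam I) S (rees_mult G P) (rees_inv G P) undefined 4 (eq_or_eq S)"
proof -
  define \<sigma> where "\<sigma> = (\<lambda>(j, \<mu>, j', \<mu>'). nth [coord_term j \<mu> (Var 0), coord_term j \<mu> (Var 1),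
      coord_term j' \<mu>' (Var 2), coord_term j' \<mu>' (Var 3)])"
  let ?Q = "I \<times> Lam \<times> I \<times> Lam"
  let ?X = "\<lambda>q. {xs. length xs = 4 \<and> set xs \<subseteq> S \<and>
      map (\<lambda>i. fst (snd (evS (nth xs) (\<sigma> q i)))) [0..<4] \<in> eq_or_eq (carrier G)}"
  have ev: "evS \<rho> (coord_term j \<mu> (Var k)) = (l1, coord j \<mu> (\<rho> k), i1)"
    if "\<rho> k \<in> S" "j \<in> I" "\<mu> \<in> Lam" for \<rho> j \<mu> k
    using eval_coord_term[of \<rho> "Var k"] that by simp
  have "algebraic_set (rees_terms G Lam I) S (rees_mult G P) (rees_inv G P) undefined 4 (?X q)"
    if q: "q \<in> ?Q" for q
  proof (rule algebraic_pullback_to_rees[OF D])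
    fix i :: nat assume "i < 4"
    then have i: "i = 0 \<or> i = 1 \<or> i = 2 \<or> i = 3" by auto
    show "\<sigma> q i \<in> rees_terms G Lam I \<and> vars (\<sigma> q i) \<subseteq> {..<4}"
      using i q l1 i1 by (auto simp: \<sigma>_def coord_term_def rees_terms_def rees_carrier_def)
    fix xs :: "('l \<times> 'g \<times> 'i) list" assume "length xs = 4" "set xs \<subseteq> S"
    then have "xs ! k \<in> S" if "k < 4" for k using that by auto
    then show "fst (evS (nth xs) (\<sigma> q i)) = l1 \<and> snd (snd (evS (nth xs) (\<sigma> q i))) = i1"
      using i q by (auto simp: \<sigma>_def ev)
  qed
  then have "algebraic_set (rees_terms G Lam I) S (rees_mult G P) (rees_inv G P) undefined 4 (\<Inter>q\<in>?Q. ?X q)"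
    using l1 i1 by (intro algebraic_INT) auto
  moreover have "(\<Inter>q\<in>?Q. ?X q) = eq_or_eq S"
  proof (rule Set.set_eqI)
    fix xs :: "('l \<times> 'g \<times> 'i) list"
    show "xs \<in> (\<Inter>q\<in>?Q. ?X q) \<longleftrightarrow> xs \<in> eq_or_eq S"
    proof (cases "length xs = 4 \<and> set xs \<subseteq> S")
      case False
      then have "xs \<notin> ?X (i1, l1, i1, l1)" by blast
      then show ?thesis using False l1 i1 unfolding eq_or_eq_def by blast
    next
      case True
      then have xs: "xs ! k \<in> S" if "k < 4" for k using that by auto
      have mem: "xs \<in> ?X (j, \<mu>, j', \<mu>') \<longleftrightarrow>
          coord j \<mu> (xs ! 0) = coord j \<mu> (xs ! 1) \<or> coord j' \<mu>' (xs ! 2) = coord j' \<mu>' (xs ! 3)"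
        if "j \<in> I" "\<mu> \<in> Lam" "j' \<in> I" "\<mu>' \<in> Lam" for j \<mu> j' \<mu>'
        using True that xs by (simp add: \<sigma>_def ev eq_or_eq_def coord_closed upt_rec)
      show ?thesis
        using mem eq_or_eq_via_coords[OF ns] True by auto
    qed
  qed
  ultimately show ?thesis by simp
qed

subsection \<open>Necessity of the condition on G\<close>

fun lam_of :: "('l \<times> 'g \<times> 'i) trm \<Rightarrow> 'l" where
  "lam_of (Var k) = l1"
| "lam_of (Cst c) = fst c"
| "lam_of (Mul s t) = lam_of s"
| "lam_of (Inv s) = lam_of s"
| "lam_of Unit = l1"

fun idx_of :: "('l \<times> 'g \<times> 'i) trm \<Rightarrow> 'i" where
  "idx_of (Var k) = i1"
| "idx_of (Cst c) = snd (snd c)"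
| "idx_of (Mul s t) = idx_of t"
| "idx_of (Inv s) = idx_of s"
| "idx_of Unit = i1"

fun grpT :: "('l \<times> 'g \<times> 'i) trm \<Rightarrow> 'g trm" where
  "grpT (Var k) = Var k"
| "grpT (Cst c) = Cst (fst (snd c))"
| "grpT (Mul s t) = Mul (Mul (grpT s) (Cst (P (idx_of s) (lam_of t)))) (grpT t)"
| "grpT (Inv s) =
     Mul (Mul (Cst (inv (P (idx_of s) (lam_of s)))) (Inv (grpT s))) (Cst (inv (P (idx_of s) (lam_of s))))"
| "grpT Unit = Unit"

lemma vars_grpT: "vars (grpT t) = vars t"
  by (induction t) auto

lemma eval_on_subgroup:
  assumes "t \<in> rees_terms G Lam I" and "\<And>k. k \<in> vars t \<Longrightarrow> y k \<in> carrier G"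
  shows "evS (\<lambda>k. (l1, y k, i1)) t = (lam_of t, evG y (grpT t), idx_of t)
    \<and> lam_of t \<in> Lam \<and> idx_of t \<in> I \<and> grpT t \<in> group_terms G \<and> evG y (grpT t) \<in> carrier G"
  using assms unfolding rees_terms_def
proof (induction t)
  case (Var k)
  then show ?case using l1 i1 by (simp add: group_terms_def)
next
  case (Cst c)
  then show ?case by (cases c) (auto simp: rees_carrier_def group_terms_def)
qed (auto simp: P_closed group_terms_def)

lemma solution_on_subgroup_iff:
  assumes T: "system_in (rees_terms G Lam I) n T" and ys: "length ys = n" "set ys \<subseteq> carrier G"
  shows "map (\<lambda>g. (l1, g, i1)) ys \<in> solution_set S (rees_mult G P) (rees_inv G P) undefined n T \<longleftrightarrow>
    (\<forall>(s, t)\<in>T. evG (nth ys) (grpT s) = evG (nth ys) (grpT t) \<and> lam_of s = lam_of t \<and> idx_of s = idx_of t)"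
proof -
  let ?emb = "map (\<lambda>g. (l1, g, i1))"
  have ev: "evS (nth (?emb ys)) s = (lam_of s, evG (nth ys) (grpT s), idx_of s)"
    if "s \<in> rees_terms G Lam I" "vars s \<subseteq> {..<n}" for s
  proof -
    have "evS (nth (?emb ys)) s = evS (\<lambda>k. (l1, ys ! k, i1)) s"
      using that ys by (intro eval_cong) auto
    also have "\<dots> = (lam_of s, evG (nth ys) (grpT s), idx_of s)"
      using eval_on_subgroup[OF that(1)] that ys by (auto intro: nth_var_in)
    finally show ?thesis .
  qed
  have "set (?emb ys) \<subseteq> S"
    using ys l1 i1 by (auto simp: rees_carrier_def)
  then have "?emb ys \<in> solution_set S (rees_mult G P) (rees_inv G P) undefined n T \<longleftrightarrow>
      (\<forall>(s, t)\<in>T. evS (nth (?emb ys)) s = evS (nth (?emb ys)) t)"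
    using ys unfolding solution_set_def by simp
  also have "\<dots> \<longleftrightarrow> (\<forall>(s, t)\<in>T. evG (nth ys) (grpT s) = evG (nth ys) (grpT t) \<and>
      lam_of s = lam_of t \<and> idx_of s = idx_of t)"
    using ev system_inD[OF T] by fastforce
  finally show ?thesis .
qed

(* The trace of an S-algebraic set on the copy of G is G-algebraic, provided it is nonempty
   (which fixes the outer indices of the equations). *)
lemma algebraic_pullback_to_group:
  assumes Y: "algebraic_set (rees_terms G Lam I) S (rees_mult G P) (rees_inv G P) undefined n Y"
    and ys0: "length ys0 = n" "set ys0 \<subseteq> carrier G" "map (\<lambda>g. (l1, g, i1)) ys0 \<in> Y"
  shows "algebraic_set (group_terms G) (carrier G) (mult G) (m_inv G) \<one> n
    {ys. length ys = n \<and> set ys \<subseteq> carrier G \<and> map (\<lambda>g. (l1, g, i1)) ys \<in> Y}"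
    (is "algebraic_set _ _ _ _ _ n ?X")
proof -
  obtain T where T: "system_in (rees_terms G Lam I) n T"
    and YT: "Y = solution_set S (rees_mult G P) (rees_inv G P) undefined n T"
    using Y unfolding algebraic_set_iff by blast
  define Sys where "Sys = {(grpT s, grpT t) | s t. (s, t) \<in> T}"
  have sys: "system_in (group_terms G) n Sys"
  proof (rule system_inI)
    fix s' t' assume "(s', t') \<in> Sys"
    then obtain s t where st: "(s, t) \<in> T" "s' = grpT s" "t' = grpT t"
      unfolding Sys_def by blast
    then show "s' \<in> group_terms G \<and> t' \<in> group_terms G \<and> vars s' \<subseteq> {..<n} \<and> vars t' \<subseteq> {..<n}"
      using system_inD[OF T st(1)] eval_on_subgroup[of _ "\<lambda>_. \<one>"] by (simp add: vars_grpT)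
  qed
  have transl: "map (\<lambda>g. (l1, g, i1)) ys \<in> Y \<longleftrightarrow>
      (\<forall>(s, t)\<in>T. evG (nth ys) (grpT s) = evG (nth ys) (grpT t) \<and> lam_of s = lam_of t \<and> idx_of s = idx_of t)"
    if "length ys = n" "set ys \<subseteq> carrier G" for ys
    unfolding YT using solution_on_subgroup_iff[OF T that] .
  have indices: "lam_of s = lam_of t \<and> idx_of s = idx_of t" if "(s, t) \<in> T" for s t
    using transl[OF ys0(1,2)] ys0(3) that by blast
  have "?X = solution_set (carrier G) (mult G) (m_inv G) \<one> n Sys"
  proof (rule Set.set_eqI)
    fix ys
    show "ys \<in> ?X \<longleftrightarrow> ys \<in> solution_set (carrier G) (mult G) (m_inv G) \<one> n Sys"
    proof (cases "length ys = n \<and> set ys \<subseteq> carrier G")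
      case True
      have "ys \<in> solution_set (carrier G) (mult G) (m_inv G) \<one> n Sys \<longleftrightarrow>
          (\<forall>(s, t)\<in>T. evG (nth ys) (grpT s) = evG (nth ys) (grpT t))"
        using True unfolding solution_set_def Sys_def by blast
      then show ?thesis using True transl[of ys] indices by fastforce
    qed (auto simp: solution_set_def)
  qed
  with sys show ?thesis unfolding algebraic_set_iff by blast
qed

lemma group_eq_or_eq_algebraic:
  assumes D: "algebraic_set (rees_terms G Lam I) S (rees_mult G P) (rees_inv G P) undefined 4 (eq_or_eq S)"
  shows "algebraic_set (group_terms G) (carrier G) (mult G) (m_inv G) \<one> 4 (eq_or_eq (carrier G))"
proof -
  let ?emb = "map (\<lambda>g. (l1, g, i1))"
  have "eq_or_eq (carrier G) = {ys. length ys = 4 \<and> set ys \<subseteq> carrier G \<and> ?emb ys \<in> eq_or_eq S}"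
  proof (rule Set.set_eqI)
    fix ys :: "'g list"
    have "set (?emb ys) \<subseteq> S \<longleftrightarrow> set ys \<subseteq> carrier G"
      using l1 i1 by (auto simp: rees_carrier_def)
    moreover have "?emb ys ! a = ?emb ys ! b \<longleftrightarrow> ys ! a = ys ! b" if "length ys = 4" "a < 4" "b < 4" for a b
      using that by simp
    ultimately show "ys \<in> eq_or_eq (carrier G) \<longleftrightarrow> ys \<in> {ys. length ys = 4 \<and> set ys \<subseteq> carrier G \<and> ?emb ys \<in> eq_or_eq S}"
      unfolding eq_or_eq_def by auto
  qed
  moreover have "?emb [\<one>, \<one>, \<one>, \<one>] \<in> eq_or_eq S"
    using l1 i1 by (simp add: eq_or_eq_def rees_carrier_def)
  ultimately show ?thesis
    using algebraic_pullback_to_group[OF D, of "[\<one>, \<one>, \<one>, \<one>]"] by simp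
qed

subsection \<open>Necessity of non-singularity\<close>

(* not_ed_by_congruence for S: the congruence and the coordinate conditions only need to be
   checked on the two operations. *)
lemma rees_congruence_not_ed:
  fixes \<pi> :: "'l \<times> 'g \<times> 'i \<Rightarrow> 'z" and c :: "'l \<times> 'g \<times> 'i \<Rightarrow> 'c"
  assumes ab: "a \<in> S" "b \<in> S" "a \<noteq> b" "\<pi> a = \<pi> b"
    and m_cong: "\<And>x y x' y'. x \<in> S \<Longrightarrow> y \<in> S \<Longrightarrow> x' \<in> S \<Longrightarrow> y' \<in> S \<Longrightarrow>
      \<pi> x = \<pi> x' \<Longrightarrow> \<pi> y = \<pi> y' \<Longrightarrow> \<pi> (rees_mult G P x y) = \<pi> (rees_mult G P x' y')"
    and iv_cong: "\<And>x x'. x \<in> S \<Longrightarrow> x' \<in> S \<Longrightarrow> \<pi> x = \<pi> x' \<Longrightarrow> \<pi> (rees_inv G P x) = \<pi> (rees_inv G P x')"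
    and c_mult: "(\<forall>x y. c (rees_mult G P x y) = c x) \<or> (\<forall>x y. c (rees_mult G P x y) = c y)"
    and c_inv: "\<And>x. c (rees_inv G P x) = c x"
    and sep: "\<And>x y. \<pi> x = \<pi> y \<Longrightarrow> c x = c y \<Longrightarrow> x = y"
  shows "\<not> rees_ed G P Lam I"
  unfolding rees_ed_def
proof (rule not_ed_by_congruence[where \<pi> = \<pi> and c = c and a = a and b = b])
  show "Var k \<in> rees_terms G Lam I" for k by (simp add: rees_terms_def)
  show "Cst a \<in> rees_terms G Lam I" "Cst b \<in> rees_terms G Lam I"
    using ab by (simp_all add: rees_terms_def)
  show "\<pi> (evS \<rho> t) = \<pi> (evS \<rho>' t)"
    if "t \<in> rees_terms G Lam I" "\<And>k. k \<in> vars t \<Longrightarrow> \<rho> k \<in> S \<and> \<rho>' k \<in> S \<and> \<pi> (\<rho> k) = \<pi> (\<rho>' k)"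
    for t \<rho> \<rho>'
    using that unfolding rees_terms_def
    by (intro eval_congruence[where A = S]) (auto intro: rees_mult_closed rees_inv_closed m_cong iv_cong)
  show "\<exists>h. proj_or_const h \<and> (\<forall>x y. c (evS (nth [x, y]) t) = h (c x) (c y))"
    if "t \<in> rees_terms G Lam I" "vars t \<subseteq> {..<2}" for t
    using that unfolding rees_terms_def by (intro eval_coordinate[OF c_mult c_inv]) auto
qed (use ab sep in auto)

(* Two equal rows i, j: merging j into i is a congruence, and the last coordinate
   separates (l1,1,i) from (l1,1,j). *)
lemma equal_rows_not_ed:
  assumes ij: "i \<in> I" "j \<in> I" "i \<noteq> j" and rows: "\<And>l. l \<in> Lam \<Longrightarrow> P i l = P j l"
  shows "\<not> rees_ed G P Lam I"
proof -
  define merge where "merge k = (if k = j then i else k)" for k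
  define \<pi> where "\<pi> x = (fst x, fst (snd x), merge (snd (snd x)))" for x :: "'l \<times> 'g \<times> 'i"
  have P_merge: "P k m = P k' m" if "m \<in> Lam" "merge k = merge k'" for k k' m
    using that rows unfolding merge_def by (auto split: if_splits)
  show ?thesis
  proof (rule rees_congruence_not_ed[where \<pi> = \<pi> and c = "\<lambda>x. snd (snd x)"])
    show "(l1, \<one>, i) \<in> S" "(l1, \<one>, j) \<in> S" using ij l1 by (auto simp: rees_carrier_def)
    show "(l1, \<one>, i) \<noteq> (l1, \<one>, j)" "\<pi> (l1, \<one>, i) = \<pi> (l1, \<one>, j)"
      using ij by (simp_all add: \<pi>_def merge_def)
    show "\<pi> (rees_mult G P x y) = \<pi> (rees_mult G P x' y')"
      if "y \<in> S" "\<pi> x = \<pi> x'" "\<pi> y = \<pi> y'" for x y x' y'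
    proof -
      obtain l g k m h k2 l' g' k' m' h' k2' where
        xy: "x = (l, g, k)" "y = (m, h, k2)" "x' = (l', g', k')" "y' = (m', h', k2')"
        by (cases x, cases y, cases x', cases y') blast
      then have "m' = m" "merge k = merge k'" "m \<in> Lam"
        using that by (auto simp: \<pi>_def rees_carrier_def)
      then have "P k m = P k' m'" using P_merge[of m k k'] by simp
      then show ?thesis using that xy by (simp add: \<pi>_def)
    qed
    show "\<pi> (rees_inv G P x) = \<pi> (rees_inv G P x')" if "x \<in> S" "\<pi> x = \<pi> x'" for x x'
    proof -
      obtain l g k l' g' k' where xx: "x = (l, g, k)" "x' = (l', g', k')"
        by (cases x, cases x') blast
      then have "l' = l" "merge k = merge k'" "l \<in> Lam"
        using that by (auto simp: \<pi>_def rees_carrier_def)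
      then have "P k l = P k' l'" using P_merge[of l k k'] by simp
      then show ?thesis using that xx by (simp add: \<pi>_def)
    qed
    show "(\<forall>x y. snd (snd (rees_mult G P x y)) = snd (snd x)) \<or> (\<forall>x y. snd (snd (rees_mult G P x y)) = snd (snd y))"
      by (simp add: idx_rees_mult)
    show "snd (snd (rees_inv G P x)) = snd (snd x)" for x
      by (cases x) simp
    show "x = y" if "\<pi> x = \<pi> y" "snd (snd x) = snd (snd y)" for x y
      using that by (cases x; cases y) (simp add: \<pi>_def)
  qed
qed

(* Two equal columns: symmetrically, merge the first coordinate. *)
lemma equal_columns_not_ed:
  assumes lm: "l \<in> Lam" "m \<in> Lam" "l \<noteq> m" and cols: "\<And>k. k \<in> I \<Longrightarrow> P k l = P k m"
  shows "\<not> rees_ed G P Lam I"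
proof -
  define merge where "merge \<nu> = (if \<nu> = m then l else \<nu>)" for \<nu>
  define \<pi> where "\<pi> x = (merge (fst x), fst (snd x), snd (snd x))" for x :: "'l \<times> 'g \<times> 'i"
  have P_merge: "P k \<nu> = P k \<nu>'" if "k \<in> I" "merge \<nu> = merge \<nu>'" for k \<nu> \<nu>'
    using that cols unfolding merge_def by (auto split: if_splits)
  show ?thesis
  proof (rule rees_congruence_not_ed[where \<pi> = \<pi> and c = fst])
    show "(l, \<one>, i1) \<in> S" "(m, \<one>, i1) \<in> S" using lm i1 by (auto simp: rees_carrier_def)
    show "(l, \<one>, i1) \<noteq> (m, \<one>, i1)" "\<pi> (l, \<one>, i1) = \<pi> (m, \<one>, i1)"
      using lm by (simp_all add: \<pi>_def merge_def)
    show "\<pi> (rees_mult G P x y) = \<pi> (rees_mult G P x' y')"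
      if "x \<in> S" "\<pi> x = \<pi> x'" "\<pi> y = \<pi> y'" for x y x' y'
    proof -
      obtain \<nu> g k \<mu> h k2 \<nu>' g' k' \<mu>' h' k2' where
        xy: "x = (\<nu>, g, k)" "y = (\<mu>, h, k2)" "x' = (\<nu>', g', k')" "y' = (\<mu>', h', k2')"
        by (cases x, cases y, cases x', cases y') blast
      then have "k' = k" "merge \<mu> = merge \<mu>'" "k \<in> I"
        using that by (auto simp: \<pi>_def rees_carrier_def)
      then have "P k \<mu> = P k' \<mu>'" using P_merge[of k \<mu> \<mu>'] by simp
      then show ?thesis using that xy by (simp add: \<pi>_def)
    qed
    show "\<pi> (rees_inv G P x) = \<pi> (rees_inv G P x')" if "x \<in> S" "\<pi> x = \<pi> x'" for x x'
    proof -
      obtain \<nu> g k \<nu>' g' k' where xx: "x = (\<nu>, g, k)" "x' = (\<nu>', g', k')"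
        by (cases x, cases x') blast
      then have "k' = k" "merge \<nu> = merge \<nu>'" "k \<in> I"
        using that by (auto simp: \<pi>_def rees_carrier_def)
      then have "P k \<nu> = P k' \<nu>'" using P_merge[of k \<nu> \<nu>'] by simp
      then show ?thesis using that xx by (simp add: \<pi>_def)
    qed
    show "(\<forall>x y. fst (rees_mult G P x y) = fst x) \<or> (\<forall>x y. fst (rees_mult G P x y) = fst y)"
      by (simp add: fst_rees_mult)
    show "fst (rees_inv G P x) = fst x" for x
      by (cases x) simp
    show "x = y" if "\<pi> x = \<pi> y" "fst x = fst y" for x y
      using that by (cases x; cases y) (simp add: \<pi>_def)
  qed
qed

lemma group_ed_iff_eq_or_eq:
  "group_ed G \<longleftrightarrow> algebraic_set (group_terms G) (carrier G) (mult G) (m_inv G) \<one> 4 (eq_or_eq (carrier G))"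
  unfolding group_ed_def
  by (rule equational_domain_iff_eq_or_eq[OF group_terms_subst group_terms_eval_closed])
     (simp_all add: group_terms_def)

lemma rees_ed_iff_eq_or_eq:
  "rees_ed G P Lam I \<longleftrightarrow>
   algebraic_set (rees_terms G Lam I) S (rees_mult G P) (rees_inv G P) undefined 4 (eq_or_eq S)"
  unfolding rees_ed_def
  by (rule equational_domain_iff_eq_or_eq[OF rees_terms_subst rees_terms_eval_closed])
     (simp_all add: rees_terms_def)

lemma non_singular_if_rees_ed:
  assumes "rees_ed G P Lam I"
  shows "non_singular P Lam I"
  using assms equal_rows_not_ed equal_columns_not_ed unfolding non_singular_def by blast

theorem rees_ed_iff:
  "rees_ed G P Lam I \<longleftrightarrow> non_singular P Lam I \<and> group_ed G"
  using non_singular_if_rees_ed group_eq_or_eq_algebraic rees_eq_or_eq_algebraic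
  unfolding group_ed_iff_eq_or_eq rees_ed_iff_eq_or_eq by blast

end

theorem mainTheorem7:
  fixes G :: "('g, 'b) monoid_scheme" and P :: "'i \<Rightarrow> 'l \<Rightarrow> 'g"
    and Lam :: "'l set" and I :: "'i set" and l1 :: 'l and i1 :: 'i
  assumes "group G"
    and "sandwich_matrix G P Lam I l1 i1"
  shows "rees_ed G P Lam I \<longleftrightarrow> non_singular P Lam I \<and> group_ed G"
proof -
  interpret rees G P Lam I l1 i1
    using assms by (simp add: rees_def rees_axioms_def)
  show ?thesis by (rule rees_ed_iff)
qed

end
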